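(* Let $q$ be a positive integer and let $f(r)=\frac{4}{\pi^2}\sum_{k\ge0}\frac{\sec((2k+1)\pi r)}{(2k+1)^2}$. Then \[ f(1/q)=\begin{cases}1/2 & \text{if } q\equiv 0 \pmod 4,\\ 1/2-1/q & \text{if } q\equiv 1 \pmod 4,\\ \infty & \text{if } q\equiv 2 \pmod 4,\\ 1/2+1/q & \text{if } q\equiv 3 \pmod 4,\end{cases} \] where the value $\infty$ means that $1/q$ is a singularity of $f$.
   Context: The function $f$ is defined by the series $f(r)=\frac{4}{\pi^2}\sum_{k\ge0}\frac{\sec((2k+1)\pi r)}{(2k+1)^2}$, with $\sec x=1/\cos x$. Equivalently $f(r)=\tfrac12(\psi(r)-\psi(r+1))$ where $\psi(r)=\frac{4}{\pi^2}\sum_{n\ge1}\frac{\sec(n\pi r)}{n^2}$. The function $f$ is even and satisfies $f(r+1)=-f(r)$. *)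

theory Defs
  imports "HOL-Analysis.Analysis"
begin

definition sec :: "real \<Rightarrow> real" where
  "sec x = 1 / cos x"

definition f_term :: "real \<Rightarrow> nat \<Rightarrow> real" where
  "f_term r k = 4 / pi\<^sup>2 * (sec ((2 * real k + 1) * pi * r) / (2 * real k + 1)\<^sup>2)"

text \<open>r is a singularity of f: some term of the series has cos = 0, i.e. sec = infinity.\<close>
definition f_singular :: "real \<Rightarrow> bool" where
  "f_singular r \<longleftrightarrow> (\<exists>k::nat. cos ((2 * real k + 1) * pi * r) = 0)"

end

theory Submission
  imports Defs
begin

text \<open>
  Write \<open>k = q m + b\<close> with \<open>b < q\<close>. Since \<open>sec (n \<pi> / q)\<close> depends only on \<open>n mod 2q\<close>,
  the series for \<open>f(1/q)\<close> splits into \<open>q\<close> series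
  \<open>\<Sum>\<^sub>m 1 / (m + z\<^sub>b)\<^sup>2 = \<psi>'(z\<^sub>b)\<close> with \<open>z\<^sub>b = (2b + 1) / 2q\<close>, weighted by \<open>sec ((2b + 1) \<pi> / q)\<close>.
  The weights are invariant under \<open>b \<mapsto> q - 1 - b\<close>, i.e. \<open>z \<mapsto> 1 - z\<close>, so the reflection formula
  \<open>\<psi>'(z) + \<psi>'(1 - z) = \<pi>\<^sup>2 / sin\<^sup>2 (\<pi> z)\<close> (obtained by differentiating
  \<open>\<Gamma>(z) \<Gamma>(1 - z) = \<pi> / sin (\<pi> z)\<close> twice) makes the sum finite. With
  \<open>sec (2y) / sin\<^sup>2 y = 2 sec (2y) + 1 / sin\<^sup>2 y\<close> and the same computation for the weight \<open>1\<close>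
  (at \<open>q\<close> and at \<open>q = 1\<close>), this gives \<open>f(1/q) = 1/2 + S / q\<^sup>2\<close> with
  \<open>S = \<Sum>b<q. sec ((2b + 1) \<pi> / q)\<close> whenever no term is singular, i.e. \<open>q mod 4 \<noteq> 2\<close>.
  For even \<open>q\<close> the angles come in pairs differing by \<open>\<pi>\<close>, so \<open>S = 0\<close>. For \<open>q = 2p + 1\<close>,
  \<open>cos ((2p + 1) x) / cos x\<close> is a trigonometric polynomial with constant term \<open>(-1)\<^sup>p\<close> whose
  other frequencies average out over the \<open>q\<close> angles, and it equals \<open>-sec x\<close> at each of them;
  hence \<open>S = -(-1)\<^sup>p q\<close>.
\<close>

lemma Gamma_reflection_real:
  fixes x :: real
  shows "Gamma x * Gamma (1 - x) = pi / sin (pi * x)"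
proof -
  have "complex_of_real (Gamma x * Gamma (1 - x)) = Gamma (of_real x) * Gamma (1 - of_real x)"
    by (metis Gamma_complex_of_real of_real_1 of_real_diff of_real_mult)
  also have "\<dots> = of_real pi / sin (of_real pi * of_real x)"
    by (rule Gamma_reflection_complex)
  also have "\<dots> = complex_of_real (pi / sin (pi * x))"
    by (metis of_real_divide of_real_mult sin_of_real)
  finally show ?thesis
    by (simp only: of_real_eq_iff)
qed

lemma Digamma_reflection_real:
  fixes x :: real
  assumes x: "0 < x" "x < 1"
  shows "Digamma (1 - x) - Digamma x = pi * cos (pi * x) / sin (pi * x)"
proof -
  have sin_pos: "sin (pi * y) > 0" if "0 < y" "y < 1" for y :: real
    using that by (intro sin_gt_zero) auto
  have reflection: "Gamma y * Gamma (1 - y) * sin (pi * y) = pi" if "y \<in> {0<..<1}" for y :: real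
    using that Gamma_reflection_real[of y] sin_pos[of y] by (simp add: field_simps)
  have "((\<lambda>y. Gamma y * Gamma (1 - y) * sin (pi * y)) has_field_derivative 0) (at x)"
    by (rule has_field_derivative_transform_within_open[OF DERIV_const, where S = "{0<..<1}"])
      (use x reflection in auto)
  moreover have "((\<lambda>y. Gamma y * Gamma (1 - y) * sin (pi * y)) has_field_derivative
      Gamma x * Gamma (1 - x) * ((Digamma x - Digamma (1 - x)) * sin (pi * x) + pi * cos (pi * x))) (at x)"
    using x by (auto intro!: derivative_eq_intros simp: algebra_simps nonpos_Ints_def)
  ultimately have "Gamma x * Gamma (1 - x) * ((Digamma x - Digamma (1 - x)) * sin (pi * x) + pi * cos (pi * x)) = 0"
    by (rule DERIV_unique[rotated])
  moreover have "Gamma x > 0" "Gamma (1 - x) > 0"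
    using x by simp_all
  ultimately have "(Digamma x - Digamma (1 - x)) * sin (pi * x) + pi * cos (pi * x) = 0"
    by simp
  with sin_pos[OF x] show ?thesis
    by (simp add: field_simps)
qed

lemma Polygamma_1_reflection_real:
  fixes x :: real
  assumes x: "0 < x" "x < 1"
  shows "Polygamma 1 x + Polygamma 1 (1 - x) = pi\<^sup>2 / (sin (pi * x))\<^sup>2"
proof -
  have sin_pos: "sin (pi * x) > 0"
    using x by (intro sin_gt_zero) auto
  have "((\<lambda>y. Digamma (1 - y) - Digamma y) has_field_derivative
      - Polygamma 1 (1 - x) - Polygamma 1 x) (at x)"
    using x by (auto intro!: derivative_eq_intros simp: nonpos_Ints_def)
  moreover have "((\<lambda>y. pi * cos (pi * y) / sin (pi * y)) has_field_derivative
      - (pi\<^sup>2 / (sin (pi * x))\<^sup>2)) (at x)"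
    using sin_pos by (auto intro!: derivative_eq_intros simp: field_simps)
      (use sin_cos_squared_add[of "pi * x"] in algebra)
  then have "((\<lambda>y. Digamma (1 - y) - Digamma y) has_field_derivative
      - (pi\<^sup>2 / (sin (pi * x))\<^sup>2)) (at x)"
    by (rule has_field_derivative_transform_within_open[where S = "{0<..<1}"])
      (use x Digamma_reflection_real in auto)
  ultimately show ?thesis
    by (auto dest: DERIV_unique)
qed

lemma Polygamma_1_sums:
  fixes x :: real
  assumes "0 < x"
  shows "(\<lambda>k. 1 / (x + real k)\<^sup>2) sums Polygamma 1 x"
  using Polygamma_LIMSEQ[of x 1] assms by (simp add: numeral_2_eq_2 field_simps)

lemma sums_by_residues:
  fixes h :: "nat \<Rightarrow> 'a::real_normed_vector"
  assumes "q > 0" and residue_sums: "\<And>b. b < q \<Longrightarrow> (\<lambda>m. h (q * m + b)) sums s b"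
  shows "h sums (\<Sum>b<q. s b)"
proof -
  define h_res where "h_res b k = (if k mod q = b then h k else 0)" for b k
  have "h_res b sums s b" if "b < q" for b
  proof -
    have "strict_mono (\<lambda>m. q * m + b)"
      using \<open>q > 0\<close> by (auto simp: strict_mono_def)
    moreover have "h_res b k = 0" if "k \<notin> range (\<lambda>m. q * m + b)" for k
      using that mult_div_mod_eq[of q k] unfolding h_res_def by (metis rangeI)
    moreover have "(\<lambda>m. h_res b (q * m + b)) sums s b"
      using residue_sums[OF \<open>b < q\<close>] \<open>b < q\<close> by (simp add: h_res_def)
    ultimately show ?thesis
      using sums_mono_reindex[of "\<lambda>m. q * m + b" "h_res b" "s b"] by blast
  qed
  then have "(\<lambda>k. \<Sum>b<q. h_res b k) sums (\<Sum>b<q. s b)"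
    by (intro sums_sum) simp
  moreover have "(\<Sum>b<q. h_res b k) = h k" for k
    using \<open>q > 0\<close> unfolding h_res_def by simp
  ultimately show ?thesis
    by simp
qed

lemma periodic_odd_squares_sums_Polygamma:
  fixes g :: "nat \<Rightarrow> real"
  assumes "q > 0" and periodic: "\<And>m n. g (2 * q * m + n) = g n"
  shows "(\<lambda>k. g (2 * k + 1) / (2 * real k + 1)\<^sup>2) sums
    ((\<Sum>b<q. g (2 * b + 1) * Polygamma 1 ((2 * real b + 1) / (2 * real q))) / (4 * (real q)\<^sup>2))"
proof -
  define z where "z b = (2 * real b + 1) / (2 * real q)" for b
  have "(\<lambda>m. g (2 * (q * m + b) + 1) / (2 * real (q * m + b) + 1)\<^sup>2) sums
      (g (2 * b + 1) * Polygamma 1 (z b) / (4 * (real q)\<^sup>2))" if "b < q" for b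
  proof -
    have "g (2 * (q * m + b) + 1) / (2 * real (q * m + b) + 1)\<^sup>2
        = g (2 * b + 1) / (4 * (real q)\<^sup>2) * (1 / (z b + real m)\<^sup>2)" for m
    proof -
      have "g (2 * (q * m + b) + 1) = g (2 * b + 1)"
        using periodic[of m "2 * b + 1"] by (simp add: algebra_simps)
      moreover have "2 * real (q * m + b) + 1 = 2 * real q * (z b + real m)"
        using \<open>q > 0\<close> by (simp add: z_def field_simps)
      ultimately show ?thesis
        by (simp add: power_mult_distrib)
    qed
    moreover have "z b > 0"
      using \<open>q > 0\<close> by (simp add: z_def)
    ultimately show ?thesis
      using sums_mult[OF Polygamma_1_sums, of "z b" "g (2 * b + 1) / (4 * (real q)\<^sup>2)"] by simp
  qed
  then show ?thesis
    unfolding sum_divide_distrib z_def[symmetric] by (rule sums_by_residues[OF \<open>q > 0\<close>])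
qed

lemma periodic_odd_squares_sums:
  fixes g :: "nat \<Rightarrow> real"
  assumes "q > 0"
    and periodic: "\<And>m n. g (2 * q * m + n) = g n"
    and symmetric: "\<And>b. b < q \<Longrightarrow> g (2 * q - (2 * b + 1)) = g (2 * b + 1)"
  shows "(\<lambda>k. g (2 * k + 1) / (2 * real k + 1)\<^sup>2) sums
    (pi\<^sup>2 / (8 * (real q)\<^sup>2) * (\<Sum>b<q. g (2 * b + 1) / (sin (pi * (2 * real b + 1) / (2 * real q)))\<^sup>2))"
proof -
  define z where "z b = (2 * real b + 1) / (2 * real q)" for b
  have reflect: "(\<Sum>b<q. g (2 * b + 1) * Polygamma 1 (z b)) = (\<Sum>b<q. g (2 * b + 1) * Polygamma 1 (1 - z b))"
  proof -
    have "g (2 * (q - Suc b) + 1) = g (2 * b + 1)" "z (q - Suc b) = 1 - z b" if "b < q" for b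
    proof -
      have "2 * (q - Suc b) + 1 = 2 * q - (2 * b + 1)"
        using that by simp
      then show "g (2 * (q - Suc b) + 1) = g (2 * b + 1)"
        using symmetric[OF that] by simp
      show "z (q - Suc b) = 1 - z b"
        using that by (simp add: z_def field_simps)
    qed
    then show ?thesis
      by (subst sum.nat_diff_reindex[symmetric]) simp
  qed
  have "(\<Sum>b<q. g (2 * b + 1) * Polygamma 1 (z b))
      = (\<Sum>b<q. g (2 * b + 1) * (Polygamma 1 (z b) + Polygamma 1 (1 - z b))) / 2"
    using reflect by (simp add: distrib_left sum.distrib)
  also have "(\<Sum>b<q. g (2 * b + 1) * (Polygamma 1 (z b) + Polygamma 1 (1 - z b)))
      = pi\<^sup>2 * (\<Sum>b<q. g (2 * b + 1) / (sin (pi * (2 * real b + 1) / (2 * real q)))\<^sup>2)"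
    unfolding sum_distrib_left
  proof (rule sum.cong[OF refl])
    fix b assume "b \<in> {..<q}"
    then have "Polygamma 1 (z b) + Polygamma 1 (1 - z b) = pi\<^sup>2 / (sin (pi * z b))\<^sup>2"
      by (intro Polygamma_1_reflection_real) (auto simp: z_def field_simps)
    then show "g (2 * b + 1) * (Polygamma 1 (z b) + Polygamma 1 (1 - z b))
        = pi\<^sup>2 * (g (2 * b + 1) / (sin (pi * (2 * real b + 1) / (2 * real q)))\<^sup>2)"
      by (simp add: z_def)
  qed
  finally have psi_sum: "(\<Sum>b<q. g (2 * b + 1) * Polygamma 1 (z b))
      = pi\<^sup>2 * (\<Sum>b<q. g (2 * b + 1) / (sin (pi * (2 * real b + 1) / (2 * real q)))\<^sup>2) / 2" .
  show ?thesis
    using periodic_odd_squares_sums_Polygamma[of q g, OF \<open>q > 0\<close> periodic]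
    unfolding psi_sum[unfolded z_def] by (simp add: mult_ac)
qed

text \<open>The instance \<open>q = 1\<close> evaluates \<open>\<Sum>k. 1 / (2k + 1)\<^sup>2 = \<pi>\<^sup>2 / 8\<close>.\<close>

lemma sum_inverse_sin_squared_odd_angles:
  assumes "q > 0"
  shows "(\<Sum>b<q. 1 / (sin (pi * (2 * real b + 1) / (2 * real q)))\<^sup>2) = (real q)\<^sup>2"
proof -
  have "(\<lambda>k. 1 / (2 * real k + 1)\<^sup>2) sums
      (pi\<^sup>2 / (8 * (real q)\<^sup>2) * (\<Sum>b<q. 1 / (sin (pi * (2 * real b + 1) / (2 * real q)))\<^sup>2))"
    using periodic_odd_squares_sums[of q "\<lambda>_. 1"] assms by simp
  moreover have "(\<lambda>k. 1 / (2 * real k + 1)\<^sup>2) sums (pi\<^sup>2 / 8)"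
    using periodic_odd_squares_sums[of 1 "\<lambda>_. 1"] by simp
  ultimately show ?thesis
    using assms by (auto simp: field_simps dest: sums_unique2)
qed

lemma sec_double_div_sin_squared:
  assumes "sin y \<noteq> 0" "cos (2 * y) \<noteq> 0"
  shows "sec (2 * y) / (sin y)\<^sup>2 = 2 * sec (2 * y) + 1 / (sin y)\<^sup>2"
  using assms cos_double_sin[of y] by (simp add: sec_def field_simps)

lemma cos_odd_multiple_pi_div_nonzero:
  assumes "q mod 4 \<noteq> 2"
  shows "cos ((2 * real b + 1) * pi / real q) \<noteq> 0"
proof
  assume "cos ((2 * real b + 1) * pi / real q) = 0"
  then obtain i :: int where "odd i" and i: "(2 * real b + 1) * pi / real q = of_int i * (pi / 2)"
    by (auto simp: cos_zero_iff_int)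
  have "q > 0"
    using i \<open>odd i\<close> by (cases "q = 0") auto
  with i have "(2 * (2 * real b + 1)) * pi = (of_int i * real q) * pi"
    by (simp add: field_simps)
  then have "real_of_int (2 * (2 * int b + 1)) = real_of_int (i * int q)"
    by simp
  then have eq: "2 * (2 * int b + 1) = i * int q"
    by (simp only: of_int_eq_iff)
  have "odd q \<or> 4 dvd q"
    using assms by presburger
  then show False
  proof
    assume "odd q"
    have "even (i * int q)"
      unfolding eq[symmetric] by simp
    with \<open>odd i\<close> \<open>odd q\<close> show False
      by simp
  next
    assume "4 dvd q"
    then have "4 dvd i * int q"
      by (intro dvd_mult) (metis int_dvd_int_iff of_nat_numeral)
    with eq have "4 dvd 2 * (2 * int b + 1)"
      by simp
    then show False
      by presburger
  qed
qed

primrec cos_odd_quot :: "nat \<Rightarrow> real \<Rightarrow> real" where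
  "cos_odd_quot 0 x = 1"
| "cos_odd_quot (Suc p) x = 2 * cos (2 * real (Suc p) * x) - cos_odd_quot p x"

lemma cos_odd_quot_mult_cos: "cos_odd_quot p x * cos x = cos ((2 * real p + 1) * x)"
proof (induction p)
  case 0
  then show ?case
    by simp
next
  case (Suc p)
  define y where "y = 2 * real (Suc p) * x"
  have "cos_odd_quot (Suc p) x * cos x = 2 * cos y * cos x - cos (y - x)"
    using Suc by (simp add: y_def algebra_simps)
  also have "\<dots> = cos (y + x)"
    by (simp add: cos_add cos_diff)
  finally show ?case
    by (simp add: y_def algebra_simps)
qed

lemma sum_cos_odd_angles_eq_0:
  assumes "0 < j" "2 * j < q"
  shows "(\<Sum>b<q. cos (2 * real j * ((2 * real b + 1) * pi / real q))) = 0"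
proof -
  define \<phi> where "\<phi> = 2 * real j * pi / real q"
  have "sin \<phi> > 0"
    using assms by (auto simp: \<phi>_def field_simps intro!: sin_gt_zero)
  have "2 * sin \<phi> * cos (2 * real j * ((2 * real b + 1) * pi / real q))
      = sin (real (Suc b) * (2 * \<phi>)) - sin (real b * (2 * \<phi>))" for b
  proof -
    have "2 * real j * ((2 * real b + 1) * pi / real q) = (2 * real b + 1) * \<phi>"
      by (simp add: \<phi>_def)
    moreover have "real (Suc b) * (2 * \<phi>) = (2 * real b + 1) * \<phi> + \<phi>"
      "real b * (2 * \<phi>) = (2 * real b + 1) * \<phi> - \<phi>"
      by (simp_all add: algebra_simps)
    ultimately show ?thesis
      by (simp add: sin_add sin_diff)
  qed
  then have "2 * sin \<phi> * (\<Sum>b<q. cos (2 * real j * ((2 * real b + 1) * pi / real q)))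
      = (\<Sum>b<q. sin (real (Suc b) * (2 * \<phi>)) - sin (real b * (2 * \<phi>)))"
    by (simp add: sum_distrib_left)
  also have "\<dots> = sin (real q * (2 * \<phi>))"
    using sum_lessThan_telescope[of "\<lambda>b. sin (real b * (2 * \<phi>))" q] by simp
  also have "real q * (2 * \<phi>) = real (4 * j) * pi"
    using assms by (simp add: \<phi>_def)
  also have "sin (real (4 * j) * pi) = 0"
    by (rule sin_npi)
  finally show ?thesis
    using \<open>sin \<phi> > 0\<close> by simp
qed

lemma sum_cos_odd_quot_odd_angles:
  assumes "q = 2 * p + 1" "r \<le> p"
  shows "(\<Sum>b<q. cos_odd_quot r ((2 * real b + 1) * pi / real q)) = (- 1) ^ r * real q"
  using \<open>r \<le> p\<close>
proof (induction r)
  case 0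
  then show ?case
    by simp
next
  case (Suc r)
  have "(\<Sum>b<q. cos_odd_quot (Suc r) ((2 * real b + 1) * pi / real q))
      = 2 * (\<Sum>b<q. cos (2 * real (Suc r) * ((2 * real b + 1) * pi / real q)))
        - (\<Sum>b<q. cos_odd_quot r ((2 * real b + 1) * pi / real q))"
    by (simp add: sum_subtractf sum_distrib_left)
  also have "(\<Sum>b<q. cos (2 * real (Suc r) * ((2 * real b + 1) * pi / real q))) = 0"
    using assms Suc.prems by (intro sum_cos_odd_angles_eq_0) auto
  finally show ?case
    using Suc by simp
qed

definition sec_odd_angles_sum :: "nat \<Rightarrow> real" where
  "sec_odd_angles_sum q = (\<Sum>b<q. sec ((2 * real b + 1) * pi / real q))"

lemma sec_odd_angles_sum_odd:
  assumes "q = 2 * p + 1"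
  shows "sec_odd_angles_sum q = (- 1) ^ Suc p * real q"
proof -
  have "sec x = - cos_odd_quot p x" if x: "x = (2 * real b + 1) * pi / real q" for x b
  proof -
    have "(2 * real p + 1) * x = real (2 * b + 1) * pi"
      using assms by (simp add: x field_simps add_pos_nonneg)
    then have "cos_odd_quot p x * cos x = cos (real (2 * b + 1) * pi)"
      by (simp only: cos_odd_quot_mult_cos)
    also have "\<dots> = - 1"
      by (simp only: cos_npi) simp
    finally have product: "cos_odd_quot p x * cos x = - 1" .
    then have "cos x \<noteq> 0"
      by auto
    with product show ?thesis
      by (simp add: sec_def field_simps)
  qed
  then have "(\<Sum>b<q. sec ((2 * real b + 1) * pi / real q))
      = - (\<Sum>b<q. cos_odd_quot p ((2 * real b + 1) * pi / real q))"
    by (simp add: sum_negf)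
  also have "\<dots> = (- 1) ^ Suc p * real q"
    using sum_cos_odd_quot_odd_angles[OF assms, of p] by simp
  finally show ?thesis
    unfolding sec_odd_angles_sum_def .
qed

lemma sec_odd_angles_sum_even:
  assumes "even q"
  shows "sec_odd_angles_sum q = 0"
proof -
  obtain t where q: "q = t + t"
    using assms by (metis evenE mult_2)
  define x where "x b = (2 * real b + 1) * pi / real q" for b
  have shift: "sec (x (b + t)) = - sec (x b)" if "b < t" for b
  proof -
    have "x (b + t) = x b + pi"
      using that q by (auto simp: x_def field_simps)
    then show ?thesis
      by (simp add: sec_def)
  qed
  have "(\<Sum>b<q. sec (x b)) = (\<Sum>b\<in>{0..<t}. sec (x b)) + (\<Sum>b\<in>{0 + t..<t + t}. sec (x b))"
    using sum.atLeastLessThan_concat[of 0 t "t + t" "\<lambda>b. sec (x b)"] q by (simp add: atLeast0LessThan)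
  also have "\<dots> = (\<Sum>b<t. sec (x b)) + (\<Sum>b<t. sec (x (b + t)))"
    by (simp only: sum.shift_bounds_nat_ivl atLeast0LessThan)
  also have "(\<Sum>b<t. sec (x (b + t))) = (\<Sum>b<t. - sec (x b))"
    by (rule sum.cong) (simp_all add: shift)
  finally show ?thesis
    by (simp add: sec_odd_angles_sum_def x_def sum_negf)
qed

lemma sum_sec_div_sin_squared_odd_angles:
  assumes "q > 0" "q mod 4 \<noteq> 2"
  shows "(\<Sum>b<q. sec ((2 * real b + 1) * pi / real q) / (sin (pi * (2 * real b + 1) / (2 * real q)))\<^sup>2)
    = 2 * sec_odd_angles_sum q + (real q)\<^sup>2"
proof -
  have "sec ((2 * real b + 1) * pi / real q) / (sin (pi * (2 * real b + 1) / (2 * real q)))\<^sup>2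
      = 2 * sec ((2 * real b + 1) * pi / real q) + 1 / (sin (pi * (2 * real b + 1) / (2 * real q)))\<^sup>2"
    if "b < q" for b
  proof -
    define y where "y = pi * ((2 * real b + 1) / (2 * real q))"
    have double: "(2 * real b + 1) * pi / real q = 2 * y" and half: "pi * (2 * real b + 1) / (2 * real q) = y"
      by (simp_all add: y_def)
    have z: "0 < (2 * real b + 1) / (2 * real q)" "(2 * real b + 1) / (2 * real q) < 1"
      using that by (auto simp: field_simps)
    have "0 < y"
      unfolding y_def using pi_gt_zero z(1) by (rule mult_pos_pos)
    moreover have "y < pi"
      unfolding y_def using mult_strict_left_mono[OF z(2) pi_gt_zero] by simp
    ultimately have "sin y \<noteq> 0"
      using sin_gt_zero by fastforce
    moreover have "cos (2 * y) \<noteq> 0"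
      using cos_odd_multiple_pi_div_nonzero[OF \<open>q mod 4 \<noteq> 2\<close>, of b] by (simp add: double)
    ultimately show ?thesis
      unfolding double half by (rule sec_double_div_sin_squared)
  qed
  then show ?thesis
    by (simp add: sec_odd_angles_sum_def sum.distrib sum_distrib_left
        sum_inverse_sin_squared_odd_angles[OF \<open>q > 0\<close>])
qed

lemma f_term_inverse_sums:
  assumes "q > 0" "q mod 4 \<noteq> 2"
  shows "f_term (1 / real q) sums (1 / 2 + sec_odd_angles_sum q / (real q)\<^sup>2)"
proof -
  define g where "g n = sec (real n * pi / real q)" for n
  have "g (2 * q * m + n) = g n" for m n
  proof -
    have "real (2 * q * m + n) * pi / real q = real n * pi / real q + real (2 * m) * pi"
      using \<open>q > 0\<close> by (simp add: field_simps)
    then show ?thesis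
      by (simp add: g_def sec_def cos_add)
  qed
  moreover have "g (2 * q - (2 * b + 1)) = g (2 * b + 1)" if "b < q" for b
  proof -
    have "real (2 * q - (2 * b + 1)) * pi / real q = 2 * pi - real (2 * b + 1) * pi / real q"
      using \<open>q > 0\<close> that by (simp add: field_simps)
    then show ?thesis
      by (simp add: g_def sec_def)
  qed
  ultimately have "(\<lambda>k. g (2 * k + 1) / (2 * real k + 1)\<^sup>2) sums
      (pi\<^sup>2 / (8 * (real q)\<^sup>2) * (\<Sum>b<q. g (2 * b + 1) / (sin (pi * (2 * real b + 1) / (2 * real q)))\<^sup>2))"
    by (rule periodic_odd_squares_sums[of q g, OF \<open>q > 0\<close>])
  moreover have "g (2 * b + 1) = sec ((2 * real b + 1) * pi / real q)" for b
    by (simp add: g_def add.commute)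
  ultimately have "(\<lambda>k. g (2 * k + 1) / (2 * real k + 1)\<^sup>2) sums
      (pi\<^sup>2 / (8 * (real q)\<^sup>2) * (2 * sec_odd_angles_sum q + (real q)\<^sup>2))"
    by (simp only: sum_sec_div_sin_squared_odd_angles[OF assms])
  then have "(\<lambda>k. 4 / pi\<^sup>2 * (g (2 * k + 1) / (2 * real k + 1)\<^sup>2)) sums
      (4 / pi\<^sup>2 * (pi\<^sup>2 / (8 * (real q)\<^sup>2) * (2 * sec_odd_angles_sum q + (real q)\<^sup>2)))"
    by (rule sums_mult)
  also have "4 / pi\<^sup>2 * (pi\<^sup>2 / (8 * (real q)\<^sup>2) * (2 * sec_odd_angles_sum q + (real q)\<^sup>2))
      = 1 / 2 + sec_odd_angles_sum q / (real q)\<^sup>2"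
    using \<open>q > 0\<close> by (simp add: field_simps)
  also have "(\<lambda>k. 4 / pi\<^sup>2 * (g (2 * k + 1) / (2 * real k + 1)\<^sup>2)) = f_term (1 / real q)"
    by (simp add: f_term_def g_def fun_eq_iff add.commute)
  finally show ?thesis .
qed

lemma f_singular_inverse:
  assumes "q mod 4 = 2"
  shows "f_singular (1 / real q)"
proof -
  define k where "k = q div 4"
  with assms have "q = 2 * (2 * k + 1)"
    by presburger
  then have "(2 * real k + 1) * pi * (1 / real q) = pi / 2"
    by (simp add: field_simps)
  then show ?thesis
    unfolding f_singular_def by (metis cos_pi_half)
qed

theorem theorem3p1:
  fixes q :: nat
  assumes "q > 0"
  shows "(q mod 4 = 0 \<longrightarrow> f_term (1 / real q) sums (1/2))
       \<and> (q mod 4 = 1 \<longrightarrow> f_term (1 / real q) sums (1/2 - 1 / real q))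
       \<and> (q mod 4 = 2 \<longrightarrow> f_singular (1 / real q))
       \<and> (q mod 4 = 3 \<longrightarrow> f_term (1 / real q) sums (1/2 + 1 / real q))"
proof (intro conjI impI)
  assume "q mod 4 = 0"
  then show "f_term (1 / real q) sums (1/2)"
    using f_term_inverse_sums[OF assms] sec_odd_angles_sum_even[of q] by auto
next
  assume "q mod 4 = 1"
  then have "q = 2 * (2 * (q div 4)) + 1"
    by presburger
  then have "sec_odd_angles_sum q = - real q"
    by (rule sec_odd_angles_sum_odd[THEN trans]) simp
  then show "f_term (1 / real q) sums (1/2 - 1 / real q)"
    using f_term_inverse_sums[OF assms] \<open>q mod 4 = 1\<close> by (simp add: power2_eq_square)
next
  assume "q mod 4 = 2"
  then show "f_singular (1 / real q)"
    by (rule f_singular_inverse)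
next
  assume "q mod 4 = 3"
  then have "q = 2 * (2 * (q div 4) + 1) + 1"
    by presburger
  then have "sec_odd_angles_sum q = real q"
    by (rule sec_odd_angles_sum_odd[THEN trans]) simp
  then show "f_term (1 / real q) sums (1/2 + 1 / real q)"
    using f_term_inverse_sums[OF assms] \<open>q mod 4 = 3\<close> by (simp add: power2_eq_square)
qed

end
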